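(* Let $n\ge 1$, let $C, A_1,\ldots,A_m$ be real symmetric $n\times n$ matrices and $b\in\mathbb{R}^m$, and suppose the semidefinite program $$SOS^*:=\min_{X\in S_n}\ C\cdot X \quad\text{s.t. } A_i\cdot X=b_i\ (i=1,\ldots,m),\ X\succeq 0$$ has an optimal solution. For an $n\times n$ real matrix $U$ let $DD(U):=\{M\in S_n : M=U^TQU \text{ for some diagonally dominant } Q\in S_n\}$, and for a matrix $U$ consider the linear program $$LP(U):\quad \min_{X\in S_n} C\cdot X \quad\text{s.t. } A_i\cdot X=b_i\ (i=1,\ldots,m),\ X\in DD(U).$$ Define the sequence $U_0=I$, and for $k\ge 0$ let $DSOS_k$ be the optimal value of $LP(U_k)$, $X_k$ an optimal solution of $LP(U_k)$, and $U_{k+1}=\mathrm{chol}(X_k)$; assume an optimal solution exists at every iteration. Fix $k$, let $X_k$ and $X_{k+1}$ be optimal solutions of iterations $k$ and $k+1$, and assume that $X_k$ is positive definite and $SOS^*<DSOS_k$. Then $DSOS_{k+1}<DSOS_k$.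
   Context: $S_n$ denotes the real symmetric $n\times n$ matrices and $A\cdot B=\sum_{i,j}A_{ij}B_{ij}=\mathrm{Trace}(AB)$. A symmetric matrix $A$ is diagonally dominant if $a_{ii}\ge\sum_{j\ne i}|a_{ij}|$ for all $i$. For a positive semidefinite matrix $A$, $\mathrm{chol}(A)$ denotes an upper triangular (Cholesky) factor $U$ with $A=U^TU$ (unique with positive diagonal when $A$ is positive definite). *)

theory Defs
  imports "HOL-Analysis.Analysis"
begin

type_synonym 'n sqmat = "real^'n^'n"

definition sym_mat :: "'n::finite sqmat \<Rightarrow> bool" where
  "sym_mat M \<longleftrightarrow> transpose M = M"

definition frob :: "'n::finite sqmat \<Rightarrow> 'n sqmat \<Rightarrow> real" where
  "frob A B = (\<Sum>i\<in>UNIV. \<Sum>j\<in>UNIV. A $ i $ j * B $ i $ j)"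

definition psd :: "'n::finite sqmat \<Rightarrow> bool" where
  "psd X \<longleftrightarrow> sym_mat X \<and> (\<forall>x. 0 \<le> x \<bullet> (X *v x))"

definition pos_def :: "'n::finite sqmat \<Rightarrow> bool" where
  "pos_def X \<longleftrightarrow> sym_mat X \<and> (\<forall>x. x \<noteq> 0 \<longrightarrow> 0 < x \<bullet> (X *v x))"

definition diag_dom :: "'n::finite sqmat \<Rightarrow> bool" where
  "diag_dom Q \<longleftrightarrow> (\<forall>i. (\<Sum>j\<in>UNIV - {i}. \<bar>Q $ i $ j\<bar>) \<le> Q $ i $ i)"

definition DD :: "'n::finite sqmat \<Rightarrow> 'n sqmat set" where
  "DD U = {M. sym_mat M \<and> (\<exists>Q. sym_mat Q \<and> diag_dom Q \<and> M = transpose U ** Q ** U)}"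

text \<open>Cholesky factor: upper triangular U with nonnegative diagonal and X = U^T U
  (for positive definite X this is the unique factor with positive diagonal).\<close>
definition is_chol :: "'n::{finite,linorder} sqmat \<Rightarrow> 'n sqmat \<Rightarrow> bool" where
  "is_chol U X \<longleftrightarrow> (\<forall>i j. j < i \<longrightarrow> U $ i $ j = 0) \<and> (\<forall>i. 0 \<le> U $ i $ i) \<and>
     X = transpose U ** U"

definition affine_feas :: "nat \<Rightarrow> (nat \<Rightarrow> 'n::finite sqmat) \<Rightarrow> (nat \<Rightarrow> real) \<Rightarrow> 'n sqmat \<Rightarrow> bool" where
  "affine_feas m A b X \<longleftrightarrow> sym_mat X \<and> (\<forall>i<m. frob (A i) X = b i)"

definition sdp_feas :: "nat \<Rightarrow> (nat \<Rightarrow> 'n::finite sqmat) \<Rightarrow> (nat \<Rightarrow> real) \<Rightarrow> 'n sqmat set" where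
  "sdp_feas m A b = {X. affine_feas m A b X \<and> psd X}"

definition lp_feas :: "nat \<Rightarrow> (nat \<Rightarrow> 'n::finite sqmat) \<Rightarrow> (nat \<Rightarrow> real) \<Rightarrow> 'n sqmat \<Rightarrow> 'n sqmat set" where
  "lp_feas m A b U = {X. affine_feas m A b X \<and> X \<in> DD U}"

definition is_opt :: "'n::finite sqmat \<Rightarrow> 'n sqmat set \<Rightarrow> 'n sqmat \<Rightarrow> bool" where
  "is_opt C F X \<longleftrightarrow> X \<in> F \<and> (\<forall>Y\<in>F. frob C X \<le> frob C Y)"

definition opt_val :: "'n::finite sqmat \<Rightarrow> 'n sqmat set \<Rightarrow> real" where
  "opt_val C F = Inf ((\<lambda>X. frob C X) ` F)"

end

theory Submission
  imports Defs
begin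

text \<open>Write \<open>X\<^sub>k = W\<^sup>T W\<close> with \<open>W = chol X\<^sub>k\<close>, which is invertible because \<open>X\<^sub>k\<close>
  is positive definite. Then \<open>X\<^sub>k = W\<^sup>T I W\<close> with \<open>I\<close> strictly diagonally dominant, so
  for every symmetric \<open>S\<close> the matrix \<open>(1 - \<lambda>) I + \<lambda> W\<^sup>-\<^sup>T S W\<^sup>-\<^sup>1\<close> is still diagonally
  dominant for small \<open>\<lambda> > 0\<close>; that is, \<open>(1 - \<lambda>) X\<^sub>k + \<lambda> S \<in> DD(W)\<close>. Taking for \<open>S\<close> an
  optimal solution of the SDP, this point is feasible for \<open>LP(U\<^sub>k\<^sub>+\<^sub>1)\<close>, and its cost
  is strictly below \<open>C \<bullet> X\<^sub>k\<close> because the SDP optimum lies strictly below \<open>DSOS\<^sub>k\<close>.\<close>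

lemma transpose_add: "transpose (A + B) = transpose A + transpose (B :: 'a::ab_semigroup_add^'n^'m)"
  by (simp add: transpose_def vec_eq_iff)

lemma matrix_add_rdistrib: "(B + C) ** A = B ** A + C ** (A :: 'a::semiring_1^'n^'m)"
  by (vector matrix_matrix_mult_def sum.distrib[symmetric] field_simps)

lemma frob_add_scaleR: "frob A (a *\<^sub>R X + c *\<^sub>R Y) = a * frob A X + c * frob A Y"
  unfolding frob_def by (simp add: algebra_simps sum.distrib sum_distrib_left)

lemma opt_val_is_opt: "is_opt C F X \<Longrightarrow> opt_val C F = frob C X"
  unfolding is_opt_def opt_val_def by (intro cInf_eq_minimum) auto

lemma affine_feas_segment:
  assumes "affine_feas m A b X" and "affine_feas m A b Y"
  shows "affine_feas m A b ((1 - l) *\<^sub>R X + l *\<^sub>R Y)"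
  using assms unfolding affine_feas_def sym_mat_def
  by (simp add: frob_add_scaleR transpose_add transpose_scalar) (simp add: algebra_simps)

lemma pos_def_gram_invertible:
  fixes W :: "real^'n^'n"
  assumes "pos_def (transpose W ** W)"
  shows "invertible W"
proof -
  have "x = 0" if "W *v x = 0" for x
  proof (rule ccontr)
    assume "x \<noteq> 0"
    have "x \<bullet> ((transpose W ** W) *v x) = (W *v x) \<bullet> (W *v x)"
      by (simp add: matrix_vector_mul_assoc[symmetric]) (metis dot_lmul_matrix inner_commute)
    with \<open>x \<noteq> 0\<close> \<open>W *v x = 0\<close> assms show False unfolding pos_def_def by auto
  qed
  then show ?thesis
    using matrix_left_invertible_ker invertible_left_inverse by blast
qed

text \<open>The identity is an interior point of the diagonally dominant matrices: moving from it
  towards any \<open>M\<close> by \<open>\<lambda> = 1 / (1 + \<Sum>\<^sub>i\<^sub>j |M\<^sub>i\<^sub>j|)\<close> keeps every row dominant.\<close>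

lemma diag_dom_mat_1_segment:
  fixes M :: "real^'n^'n"
  shows "\<exists>l. 0 < l \<and> l \<le> 1 \<and> diag_dom ((1 - l) *\<^sub>R mat 1 + l *\<^sub>R M)"
proof -
  define K where "K = 1 + (\<Sum>i\<in>UNIV. \<Sum>j\<in>UNIV. \<bar>M $ i $ j\<bar>)"
  have K: "1 \<le> K" unfolding K_def by (simp add: sum_nonneg)
  define l where "l = 1 / K"
  have l: "0 < l" "l \<le> 1" "l * K = 1" using K unfolding l_def by auto
  have "(\<Sum>j\<in>UNIV - {i}. \<bar>((1 - l) *\<^sub>R mat 1 + l *\<^sub>R M) $ i $ j\<bar>)
          \<le> ((1 - l) *\<^sub>R mat 1 + l *\<^sub>R M) $ i $ i" for i
  proof -
    have off: "(\<Sum>j\<in>UNIV - {i}. \<bar>((1 - l) *\<^sub>R mat 1 + l *\<^sub>R M) $ i $ j\<bar>)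
                 = l * (\<Sum>j\<in>UNIV - {i}. \<bar>M $ i $ j\<bar>)"
      unfolding sum_distrib_left
      by (rule sum.cong) (use l in \<open>auto simp: mat_def abs_mult\<close>)
    have row: "(\<Sum>j\<in>UNIV - {i}. \<bar>M $ i $ j\<bar>) + \<bar>M $ i $ i\<bar> = (\<Sum>j\<in>UNIV. \<bar>M $ i $ j\<bar>)"
      by (metis (no_types, lifting) UNIV_I add.commute finite sum.remove)
    have "(\<Sum>j\<in>UNIV. \<bar>M $ i $ j\<bar>) \<le> (\<Sum>i\<in>UNIV. \<Sum>j\<in>UNIV. \<bar>M $ i $ j\<bar>)"
      by (rule member_le_sum) (auto simp: sum_nonneg)
    then have "l * ((\<Sum>j\<in>UNIV - {i}. \<bar>M $ i $ j\<bar>) + \<bar>M $ i $ i\<bar> + 1) \<le> l * K"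
      using row l unfolding K_def by (intro mult_left_mono) auto
    moreover have "- (l * M $ i $ i) \<le> l * \<bar>M $ i $ i\<bar>"
      using mult_left_mono[OF abs_ge_minus_self, of l "M $ i $ i"] l by simp
    ultimately show ?thesis
      using off l by (simp add: mat_def algebra_simps)
  qed
  then show ?thesis
    using l unfolding diag_dom_def by blast
qed

lemma gram_segment_in_DD:
  fixes W S :: "real^'n^'n"
  assumes "invertible W" and "sym_mat S"
  shows "\<exists>l. 0 < l \<and> l \<le> 1 \<and> (1 - l) *\<^sub>R (transpose W ** W) + l *\<^sub>R S \<in> DD W"
proof -
  obtain V where V: "V ** W = mat 1" "W ** V = mat 1"
    using assms(1) unfolding invertible_def by blast
  define M where "M = transpose V ** S ** V"
  have S: "transpose W ** M ** W = S"
  proof -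
    have "transpose W ** M ** W = transpose (V ** W) ** S ** (V ** W)"
      unfolding M_def by (simp add: matrix_transpose_mul matrix_mul_assoc)
    then show ?thesis using V by simp
  qed
  obtain l where l: "0 < l" "l \<le> 1" and dd: "diag_dom ((1 - l) *\<^sub>R mat 1 + l *\<^sub>R M)"
    using diag_dom_mat_1_segment by blast
  have "sym_mat M"
    using assms(2) unfolding M_def sym_mat_def by (simp add: matrix_transpose_mul matrix_mul_assoc)
  then have "sym_mat ((1 - l) *\<^sub>R mat 1 + l *\<^sub>R M)"
    unfolding sym_mat_def by (simp add: transpose_add transpose_scalar)
  moreover have "sym_mat ((1 - l) *\<^sub>R (transpose W ** W) + l *\<^sub>R S)"
    using assms(2) unfolding sym_mat_def by (simp add: transpose_add transpose_scalar matrix_transpose_mul)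
  moreover have "(1 - l) *\<^sub>R (transpose W ** W) + l *\<^sub>R S
                   = transpose W ** ((1 - l) *\<^sub>R mat 1 + l *\<^sub>R M) ** W"
    unfolding S[symmetric]
    by (simp add: matrix_add_ldistrib matrix_add_rdistrib matrix_scalar_ac scalar_matrix_assoc[symmetric])
  ultimately show ?thesis
    using l dd unfolding DD_def by blast
qed

theorem theorem3p1:
  fixes C :: "((real, 'n::{finite,linorder}) vec, 'n) vec"
    and A :: "nat \<Rightarrow> ((real, 'n) vec, 'n) vec" and b :: "nat \<Rightarrow> real" and m :: nat
    and U X :: "nat \<Rightarrow> ((real, 'n) vec, 'n) vec" and k :: nat
  assumes symC: "sym_mat C"
    and symA: "\<forall>i<m. sym_mat (A i)"
    and sdp_solvable: "\<exists>Xs. is_opt C (sdp_feas m A b) Xs"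
    and U0: "U 0 = mat 1"
    and Xopt: "\<forall>j. is_opt C (lp_feas m A b (U j)) (X j)"
    and Uchol: "\<forall>j. is_chol (U (Suc j)) (X j)"
    and pd: "pos_def (X k)"
    and gap: "opt_val C (sdp_feas m A b) < opt_val C (lp_feas m A b (U k))"
  shows "opt_val C (lp_feas m A b (U (Suc k))) < opt_val C (lp_feas m A b (U k))"
proof -
  obtain Xs where Xs: "is_opt C (sdp_feas m A b) Xs" using sdp_solvable by blast
  have Xs_feas: "affine_feas m A b Xs" "sym_mat Xs"
    using Xs unfolding is_opt_def sdp_feas_def affine_feas_def by auto
  have Xk_feas: "affine_feas m A b (X k)"
    using Xopt unfolding is_opt_def lp_feas_def by auto
  have Xk_gram: "X k = transpose (U (Suc k)) ** U (Suc k)"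
    using Uchol unfolding is_chol_def by blast
  have "invertible (U (Suc k))"
    using pd Xk_gram pos_def_gram_invertible by metis
  then obtain l where l: "0 < l" "l \<le> 1"
    and Y_DD: "(1 - l) *\<^sub>R X k + l *\<^sub>R Xs \<in> DD (U (Suc k))"
    using gram_segment_in_DD Xs_feas(2) Xk_gram by metis
  have "(1 - l) *\<^sub>R X k + l *\<^sub>R Xs \<in> lp_feas m A b (U (Suc k))"
    using Y_DD affine_feas_segment[OF Xk_feas Xs_feas(1)] unfolding lp_feas_def by blast
  then have "opt_val C (lp_feas m A b (U (Suc k))) \<le> (1 - l) * frob C (X k) + l * frob C Xs"
    using Xopt opt_val_is_opt[of C] frob_add_scaleR unfolding is_opt_def by metis
  moreover have DSOS_k: "opt_val C (lp_feas m A b (U k)) = frob C (X k)"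
    using Xopt opt_val_is_opt by blast
  moreover have "l * frob C Xs < l * frob C (X k)"
    using gap opt_val_is_opt[OF Xs] DSOS_k l by simp
  ultimately show ?thesis
    by (simp add: algebra_simps)
qed

end
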